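(* Let $\alpha\in(1,2)$, $\sigma=1-\alpha/2$, $\tau>0$, let $k\ge1$ be an integer and let $c_l^{(k,\alpha)}$ ($0\le l\le k$) be as defined in the context. For any grid functions $u^0,u^1,\dots,u^{k+1}\in\mathring{\mathcal{U}}_h$, $$\sum_{l=0}^{k-1}c_l^{(k,\alpha)}\Big(\delta_tu^{k-l+\frac12}-\delta_tu^{k-l-\frac12},\ \big(\tfrac12+\sigma\big)\delta_tu^{k+\frac12}+\big(\tfrac12-\sigma\big)\delta_tu^{k-\frac12}\Big)\ \ge\ \frac12\sum_{l=0}^{k-1}c_l^{(k,\alpha)}\Big(\|\delta_tu^{k-l+\frac12}\|^2-\|\delta_tu^{k-l-\frac12}\|^2\Big).$$
   Context: Let $L>0$, $M$ a positive integer, $h=L/M$. $\mathring{\mathcal{U}}_h=\{u=(u_0,\dots,u_M): u_0=u_M=0\}$, with inner product $(u,v)=h\sum_{i=1}^{M-1}u_iv_i$ and $\|u\|=\sqrt{(u,u)}$. For grid functions $u^j$, $\delta_tu^{j+\frac12}=(u^{j+1}-u^j)/\tau$. Coefficients: for $k\ge1$, $a_1^{(k,\alpha)}=\frac32\tau^{2-\alpha}\int_0^{1/2}(s-\frac13)(k+\sigma-s)^{1-\alpha}\,\mathrm{d}s$; $a_l^{(k,\alpha)}=\tau^{2-\alpha}\int_0^1(s-\frac12)(k+\sigma-l+\frac32-s)^{1-\alpha}\,\mathrm{d}s$ for $2\le l\le k$; $b_l^{(k,\alpha)}=\tau^{2-\alpha}\int_0^1(\frac32-s)(k+\sigma-l+\frac12-s)^{1-\alpha}\,\mathrm{d}s$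 for $1\le l\le k-1$; $b_k^{(k,\alpha)}=\tau^{2-\alpha}\int_0^{\sigma+1/2}s^{1-\alpha}\,\mathrm{d}s$; $c_l^{(k,\alpha)}=a_{k-l}^{(k,\alpha)}+b_{k-l}^{(k,\alpha)}$ for $0\le l\le k-1$, and $c_k^{(k,\alpha)}=\frac32\tau^{2-\alpha}\int_0^{1/2}(1-s)(k+\sigma-s)^{1-\alpha}\,\mathrm{d}s$. *)

theory Defs
  imports "HOL-Analysis.Analysis"
begin

definition coef_a :: "real \<Rightarrow> real \<Rightarrow> real \<Rightarrow> nat \<Rightarrow> nat \<Rightarrow> real" where
  "coef_a \<alpha> \<sigma> \<tau> k l =
     (if l = 1 then
        3/2 * \<tau> powr (2 - \<alpha>) *
          integral {0..1/2} (\<lambda>s. (s - 1/3) * (real k + \<sigma> - s) powr (1 - \<alpha>))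
      else
        \<tau> powr (2 - \<alpha>) *
          integral {0..1} (\<lambda>s. (s - 1/2) * (real k + \<sigma> - real l + 3/2 - s) powr (1 - \<alpha>)))"

definition coef_b :: "real \<Rightarrow> real \<Rightarrow> real \<Rightarrow> nat \<Rightarrow> nat \<Rightarrow> real" where
  "coef_b \<alpha> \<sigma> \<tau> k l =
     (if l = k then
        \<tau> powr (2 - \<alpha>) * integral {0..\<sigma> + 1/2} (\<lambda>s. s powr (1 - \<alpha>))
      else
        \<tau> powr (2 - \<alpha>) *
          integral {0..1} (\<lambda>s. (3/2 - s) * (real k + \<sigma> - real l + 1/2 - s) powr (1 - \<alpha>)))"

definition coef_c :: "real \<Rightarrow> real \<Rightarrow> real \<Rightarrow> nat \<Rightarrow> nat \<Rightarrow> real" where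
  "coef_c \<alpha> \<sigma> \<tau> k l =
     (if l < k then coef_a \<alpha> \<sigma> \<tau> k (k - l) + coef_b \<alpha> \<sigma> \<tau> k (k - l)
      else 3/2 * \<tau> powr (2 - \<alpha>) *
          integral {0..1/2} (\<lambda>s. (1 - s) * (real k + \<sigma> - s) powr (1 - \<alpha>)))"

text \<open>Grid functions: u :: nat \<Rightarrow> real indexed by 0..M; inner product h * sum over interior.\<close>

definition grid_inner :: "real \<Rightarrow> nat \<Rightarrow> (nat \<Rightarrow> real) \<Rightarrow> (nat \<Rightarrow> real) \<Rightarrow> real" where
  "grid_inner h M u v = h * (\<Sum>i = 1..M - 1. u i * v i)"

definition grid_norm :: "real \<Rightarrow> nat \<Rightarrow> (nat \<Rightarrow> real) \<Rightarrow> real" where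
  "grid_norm h M u = sqrt (grid_inner h M u u)"

text \<open>delta_t u^{j+1/2} = (u^{j+1} - u^j)/tau, time levels u j.\<close>
definition delta_t :: "real \<Rightarrow> (nat \<Rightarrow> nat \<Rightarrow> real) \<Rightarrow> nat \<Rightarrow> nat \<Rightarrow> real" where
  "delta_t \<tau> u j = (\<lambda>i. (u (Suc j) i - u j i) / \<tau>)"

end

theory Submission
  imports Defs
begin

(* Fix a grid node, write v j for the value of delta_t u^(j+1/2) there and
   w = (1/2 + sigma) v k + (1/2 - sigma) v (k-1).  Since
   (a - b) w - (a^2 - b^2)/2 = ((b - w)^2 - (a - w)^2)/2, the difference of the two sides is,
   node by node, sum_l c_l (E (l+1) - E l) with E l = (v (k-l) - w)^2/2, and summation by parts
   turns it into c_(k-1) E k + sum_(l>=1) (c_(l-1) - c_l) E l - c_0 E 0.  This is nonnegative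
   because c_(k-1) >= 0, c_l is nonincreasing for l >= 1, and E 0, E 1 are the multiples
   (1/2 - sigma)^2 and (1/2 + sigma)^2 of (v k - v (k-1))^2/2, so that
   c_1 (1/2 + sigma)^2 <= c_0 ((1/2 + sigma)^2 - (1/2 - sigma)^2) is what is needed.
   These three coefficient properties follow from elementary bounds on integrals of linear
   weights against s -> (y - s) powr (1 - alpha), which is increasing and convex in s. *)

lemma integral_affine:
  fixes a b c d :: real
  assumes "a \<le> b" and "\<And>s. f s = c * s + d"
  shows "integral {a..b} f = c * (b\<^sup>2 - a\<^sup>2) / 2 + d * (b - a)"
proof -
  have "((\<lambda>s. d) has_integral d * (b - a)) {a..b}"
    using has_integral_const_real[of d a b] assms(1) by (simp add: mult.commute)
  then have "((\<lambda>s. c * s + d) has_integral c * ((b\<^sup>2 - a\<^sup>2) / 2) + d * (b - a)) {a..b}"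
    using assms(1) by (intro has_integral_add has_integral_mult_right ident_has_integral)
  moreover have "f = (\<lambda>s. c * s + d)" using assms(2) by auto
  ultimately show ?thesis by (simp add: integral_unique)
qed

lemma integral_centred_weight_ge:
  fixes g :: "real \<Rightarrow> real" and b m :: real
  assumes mono: "mono_on {0..b} g" and cont: "continuous_on {0..b} g" and "0 \<le> m" "m \<le> b"
  shows "g m * (b\<^sup>2 / 2 - m * b) \<le> integral {0..b} (\<lambda>s. (s - m) * g s)"
proof -
  have "integral {0..b} (\<lambda>s. (s - m) * g m) \<le> integral {0..b} (\<lambda>s. (s - m) * g s)"
  proof (rule integral_le)
    show "(\<lambda>s. (s - m) * g m) integrable_on {0..b}" "(\<lambda>s. (s - m) * g s) integrable_on {0..b}"
      by (intro integrable_continuous_interval continuous_intros cont)+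
    fix s assume s: "s \<in> {0..b}"
    show "(s - m) * g m \<le> (s - m) * g s"
    proof (cases "s \<le> m")
      case True
      then have "g s \<le> g m" using s assms by (intro mono_onD[OF mono]) auto
      then show ?thesis using True by (intro mult_left_mono_neg) auto
    next
      case False
      then have "g m \<le> g s" using s assms by (intro mono_onD[OF mono]) auto
      then show ?thesis using False by (intro mult_left_mono) auto
    qed
  qed
  moreover have "integral {0..b} (\<lambda>s. (s - m) * g m) = g m * (b\<^sup>2 / 2 - m * b)"
    using assms by (subst integral_affine[where c = "g m" and d = "- m * g m"]) (auto simp: algebra_simps)
  ultimately show ?thesis by linarith
qed

lemma integral_centred_weight_le:
  fixes g :: "real \<Rightarrow> real" and b m :: real
  assumes mono: "mono_on {0..b} g" and cont: "continuous_on {0..b} g" and "0 < m" "m \<le> b"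
  shows "integral {0..b} (\<lambda>s. (s - m) * g s)
           \<le> g 0 * (b\<^sup>2 / 2 - m * b) + (b - m) * b / 2 * (g b - g 0)"
proof -
  \<comment> \<open>\<open>q * s\<close> is the line through the origin that dominates \<open>s - m\<close> on \<open>[0, b]\<close>\<close>
  define q where "q = (b - m) / b"
  have "integral {0..b} (\<lambda>s. (s - m) * g s)
          \<le> integral {0..b} (\<lambda>s. (s - m) * g 0 + q * s * (g b - g 0))"
  proof (rule integral_le)
    show "(\<lambda>s. (s - m) * g s) integrable_on {0..b}"
      "(\<lambda>s. (s - m) * g 0 + q * s * (g b - g 0)) integrable_on {0..b}"
      by (intro integrable_continuous_interval continuous_intros cont)+
    fix s assume s: "s \<in> {0..b}"
    have g0: "g 0 \<le> g s" and gb: "g s \<le> g b" using s assms by (auto intro: mono_onD[OF mono])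
    have "(s - m) * (g s - g 0) \<le> q * s * (g b - g 0)"
    proof (cases "s \<le> m")
      case True
      have "(s - m) * (g s - g 0) \<le> 0" using True g0 by (intro mult_nonpos_nonneg) auto
      also have "0 \<le> q * s * (g b - g 0)" using s g0 gb assms by (auto simp: q_def)
      finally show ?thesis .
    next
      case False
      have "(s - m) * (g s - g 0) \<le> (s - m) * (g b - g 0)" using False gb by (intro mult_left_mono) auto
      also have "\<dots> \<le> q * s * (g b - g 0)"
      proof (rule mult_right_mono)
        have "m * s \<le> m * b" using s assms by (intro mult_left_mono) auto
        then show "s - m \<le> q * s" using assms by (simp add: q_def field_simps)
      qed (use g0 gb in auto)
      finally show ?thesis .
    qed
    then show "(s - m) * g s \<le> (s - m) * g 0 + q * s * (g b - g 0)" by (simp add: algebra_simps)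
  qed
  also have "\<dots> = g 0 * (b\<^sup>2 / 2 - m * b) + (b - m) * b / 2 * (g b - g 0)"
    using assms
    by (subst integral_affine[where c = "g 0 + q * (g b - g 0)" and d = "- m * g 0"])
      (auto simp: q_def field_simps power2_eq_square)
  finally show ?thesis .
qed

lemma integral_weighted_mono_bounds:
  fixes g w :: "real \<Rightarrow> real"
  assumes mono: "mono_on {a..b} g" and "continuous_on {a..b} g" "continuous_on {a..b} w"
    and "\<And>s. s \<in> {a..b} \<Longrightarrow> 0 \<le> w s" and "a \<le> b"
  shows "g a * integral {a..b} w \<le> integral {a..b} (\<lambda>s. w s * g s)"
    and "integral {a..b} (\<lambda>s. w s * g s) \<le> g b * integral {a..b} w"
proof -
  have int: "(\<lambda>s. g a * w s) integrable_on {a..b}" "(\<lambda>s. w s * g s) integrable_on {a..b}"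
    "(\<lambda>s. g b * w s) integrable_on {a..b}"
    using assms by (intro integrable_continuous_interval continuous_intros; simp)+
  have "integral {a..b} (\<lambda>s. g a * w s) \<le> integral {a..b} (\<lambda>s. w s * g s)"
    using int assms by (intro integral_le) (auto simp: mult.commute intro!: mult_right_mono mono_onD[OF mono])
  then show "g a * integral {a..b} w \<le> integral {a..b} (\<lambda>s. w s * g s)" by simp
  have "integral {a..b} (\<lambda>s. w s * g s) \<le> integral {a..b} (\<lambda>s. g b * w s)"
    using int assms by (intro integral_le) (auto simp: mult.commute intro!: mult_right_mono mono_onD[OF mono])
  then show "integral {a..b} (\<lambda>s. w s * g s) \<le> g b * integral {a..b} w" by simp
qed

lemma convex_on_powr_nonpos:
  fixes p :: real
  assumes "p \<le> 0"
  shows "convex_on {0<..} (\<lambda>x. x powr p)"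
proof (rule f''_ge0_imp_convex)
  fix x :: real assume "x \<in> {0<..}"
  then show "((\<lambda>x. x powr p) has_real_derivative p * x powr (p - 1)) (at x)"
    and "((\<lambda>x. p * x powr (p - 1)) has_real_derivative p * ((p - 1) * x powr (p - 2))) (at x)"
    using DERIV_cmult[OF has_real_derivative_powr[of x "p - 1"], of p]
    by (simp_all add: has_real_derivative_powr)
  show "0 \<le> p * ((p - 1) * x powr (p - 2))"
    using assms by (intro mult_nonpos_nonpos mult_nonpos_nonneg) auto
qed simp

lemma powr_midpoint_convex:
  fixes u p :: real
  assumes "0 < u" "p \<le> 0"
  shows "2 * (u + 1) powr p \<le> u powr p + (u + 2) powr p"
proof -
  have "(1 - 1/2) *\<^sub>R u + (1/2) *\<^sub>R (u + 2) = u + 1" by (simp add: field_simps)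
  then show ?thesis
    using convex_onD[OF convex_on_powr_nonpos[OF assms(2)], of "1/2" u "u + 2"] assms by simp
qed

lemma powr_diff_add_one_le:
  fixes u p :: real
  assumes "1 \<le> u" "p \<le> 0"
  shows "u powr p - (u + 1) powr p \<le> - p"
proof -
  have u: "0 < u" using assms by simp
  have "1 + p * (1/u) \<le> 1 + p * ln (1 + 1/u)"
    using u assms(2) by (intro add_left_mono mult_left_mono_neg ln_add_one_self_le_self) auto
  also have "\<dots> \<le> exp (p * ln (1 + 1/u))" by (rule exp_ge_add_one_self)
  also have "\<dots> = (1 + 1/u) powr p"
    using u by (simp add: powr_def add_pos_pos[THEN less_imp_neq, symmetric])
  finally have bernoulli: "1 + p / u \<le> (1 + 1/u) powr p" by simp
  have "u + 1 = u * (1 + 1/u)" using u by (simp add: field_simps)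
  then have "(u + 1) powr p = u powr p * (1 + 1/u) powr p" by (simp only: powr_mult)
  then have "u powr p - (u + 1) powr p = u powr p * (1 - (1 + 1/u) powr p)"
    by (simp add: algebra_simps)
  also have "\<dots> \<le> u powr p * (- p / u)"
    using bernoulli by (intro mult_left_mono) auto
  also have "\<dots> \<le> 1 * (- p)"
  proof (rule mult_mono)
    show "u powr p \<le> 1" using assms powr_mono2'[of p 1 u] by simp
    have "p * u \<le> p * 1" using assms by (intro mult_left_mono_neg) auto
    then show "- p / u \<le> - p" using u by (simp add: le_divide_eq)
  qed (use assms u in \<open>auto intro: divide_nonpos_pos\<close>)
  finally show ?thesis by simp
qed

lemma powr_le_two_if_ge_half:
  fixes b p :: real
  assumes "1/2 \<le> b" "-1 \<le> p" "p \<le> 0"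
  shows "b powr p \<le> 2"
proof -
  have "b powr p \<le> (1/2) powr p" using assms by (intro powr_mono2') auto
  also have "\<dots> \<le> (1/2) powr (-1)" using assms by (intro powr_mono') auto
  also have "\<dots> = 2" by (simp add: powr_minus)
  finally show ?thesis .
qed

lemma mono_on_diff_powr_nonpos:
  fixes y p :: real
  assumes "b < y" "p \<le> 0"
  shows "mono_on {a..b} (\<lambda>s. (y - s) powr p)"
  using assms by (intro mono_onI powr_mono2') auto

lemma continuous_on_diff_powr:
  fixes y p :: real
  assumes "b < y"
  shows "continuous_on {a..b} (\<lambda>s. (y - s) powr p)"
  using assms by (intro continuous_intros) auto

lemma integral_centred_kernel_nonneg:
  fixes y p :: real
  assumes "1 < y" "p \<le> 0"
  shows "0 \<le> integral {0..1} (\<lambda>s. (s - 1/2) * (y - s) powr p)"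
  using integral_centred_weight_ge[of 1 "\<lambda>s. (y - s) powr p" "1/2"] assms
  by (simp add: mono_on_diff_powr_nonpos continuous_on_diff_powr)

lemma integral_centred_kernel_le:
  fixes y p :: real
  assumes "1 < y" "p \<le> 0"
  shows "integral {0..1} (\<lambda>s. (s - 1/2) * (y - s) powr p) \<le> ((y - 1) powr p - y powr p) / 4"
  using integral_centred_weight_le[of 1 "\<lambda>s. (y - s) powr p" "1/2"] assms
  by (simp add: mono_on_diff_powr_nonpos continuous_on_diff_powr)

lemma integral_third_kernel_ge:
  fixes x p :: real
  assumes "1/2 < x" "p \<le> 0"
  shows "- ((x - 1/3) powr p) / 24 \<le> integral {0..1/2} (\<lambda>s. (s - 1/3) * (x - s) powr p)"
  using integral_centred_weight_ge[of "1/2" "\<lambda>s. (x - s) powr p" "1/3"] assms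
  by (simp add: mono_on_diff_powr_nonpos continuous_on_diff_powr power2_eq_square)

lemma integral_third_kernel_nonpos:
  fixes x p :: real
  assumes "1 \<le> x" "-1 \<le> p" "p \<le> 0"
  shows "integral {0..1/2} (\<lambda>s. (s - 1/3) * (x - s) powr p) \<le> 0"
proof -
  have "(x - 1/2) powr p \<le> (x * (1/2)) powr p" using assms by (intro powr_mono2') auto
  also have "\<dots> = x powr p * (1/2) powr p" by (rule powr_mult)
  also have "\<dots> \<le> x powr p * 2" using assms powr_le_two_if_ge_half[of "1/2" p] by (intro mult_left_mono) auto
  finally have "(x - 1/2) powr p \<le> 2 * x powr p" by simp
  moreover have "integral {0..1/2} (\<lambda>s. (s - 1/3) * (x - s) powr p)
                   \<le> ((x - 1/2) powr p - x powr p) / 24 - x powr p / 24"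
    using integral_centred_weight_le[of "1/2" "\<lambda>s. (x - s) powr p" "1/3"] assms
    by (simp add: mono_on_diff_powr_nonpos continuous_on_diff_powr power2_eq_square)
  ultimately show ?thesis by (simp add: field_simps)
qed

lemma integral_tail_kernel_bounds:
  fixes y p :: real
  assumes "1 < y" "p \<le> 0"
  shows "y powr p \<le> integral {0..1} (\<lambda>s. (3/2 - s) * (y - s) powr p)"
    and "integral {0..1} (\<lambda>s. (3/2 - s) * (y - s) powr p) \<le> (y - 1) powr p"
proof -
  have "integral {0..1} (\<lambda>s::real. 3/2 - s) = 1"
    by (subst integral_affine[where c = "-1" and d = "3/2"]) auto
  then show "y powr p \<le> integral {0..1} (\<lambda>s. (3/2 - s) * (y - s) powr p)"
    and "integral {0..1} (\<lambda>s. (3/2 - s) * (y - s) powr p) \<le> (y - 1) powr p"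
    using integral_weighted_mono_bounds[of 0 1 "\<lambda>s. (y - s) powr p" "\<lambda>s. 3/2 - s"] assms
    by (simp_all add: mono_on_diff_powr_nonpos continuous_on_diff_powr continuous_intros)
qed

lemma integral_tail_kernel_antimono:
  fixes y p :: real
  assumes "2 < y" "p \<le> 0"
  shows "integral {0..1} (\<lambda>s. (3/2 - s) * (y - s) powr p)
           \<le> integral {0..1} (\<lambda>s. (3/2 - s) * (y - 1 - s) powr p)"
  using assms
  by (intro integral_le integrable_continuous_interval continuous_intros mult_left_mono powr_mono2') auto

lemma integral_kernel_step_le:
  fixes y p :: real
  assumes "2 < y" "p \<le> 0"
  shows "integral {0..1} (\<lambda>s. (s - 1/2) * (y + 1 - s) powr p)
           + integral {0..1} (\<lambda>s. (3/2 - s) * (y - s) powr p)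
         \<le> integral {0..1} (\<lambda>s. (s - 1/2) * (y - s) powr p)
           + integral {0..1} (\<lambda>s. (3/2 - s) * (y - 1 - s) powr p)"
proof -
  have int: "(\<lambda>s. (s - 1/2) * (z - s) powr p) integrable_on {0..1}"
    "(\<lambda>s. (3/2 - s) * (z - s) powr p) integrable_on {0..1}" if "1 < z" for z
    using that by (intro integrable_continuous_interval continuous_intros; auto)+
  have "integral {0..1} (\<lambda>s. (s - 1/2) * (y + 1 - s) powr p + (3/2 - s) * (y - s) powr p)
      \<le> integral {0..1} (\<lambda>s. (s - 1/2) * (y - s) powr p + (3/2 - s) * (y - 1 - s) powr p)"
  proof (rule integral_le)
    fix s :: real assume s: "s \<in> {0..1}"
    define u where "u = y - 1 - s"
    have u: "0 < u" using s assms unfolding u_def by auto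
    define D1 where "D1 = u powr p - (u + 1) powr p"
    define D2 where "D2 = (u + 1) powr p - (u + 2) powr p"
    have "0 \<le> D2" unfolding D2_def using u assms by (simp add: powr_mono2')
    moreover have "D2 \<le> D1" unfolding D1_def D2_def using powr_midpoint_convex[OF u assms(2)] by simp
    ultimately have "0 \<le> D2 + (3/2 - s) * (D1 - D2)" using s by simp
    also have "D2 + (3/2 - s) * (D1 - D2) = (s - 1/2) * D2 + (3/2 - s) * D1" by (simp add: field_simps)
    finally show "(s - 1/2) * (y + 1 - s) powr p + (3/2 - s) * (y - s) powr p
      \<le> (s - 1/2) * (y - s) powr p + (3/2 - s) * (y - 1 - s) powr p"
      unfolding D1_def D2_def u_def by (simp add: algebra_simps)
  qed (use assms int in \<open>auto intro: integrable_add\<close>)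
  then show ?thesis using assms int by (simp add: integral_add)
qed

lemma coef_a_1:
  "coef_a \<alpha> \<sigma> \<tau> k 1
     = 3/2 * \<tau> powr (2 - \<alpha>) * integral {0..1/2} (\<lambda>s. (s - 1/3) * (real k + \<sigma> - s) powr (1 - \<alpha>))"
  by (simp add: coef_a_def)

lemma coef_a_eq_integral:
  assumes "l \<noteq> 1" and "y = real k + \<sigma> - real l + 3/2"
  shows "coef_a \<alpha> \<sigma> \<tau> k l = \<tau> powr (2 - \<alpha>) * integral {0..1} (\<lambda>s. (s - 1/2) * (y - s) powr (1 - \<alpha>))"
  using assms by (simp add: coef_a_def)

lemma coef_b_eq_integral:
  assumes "l \<noteq> k" and "y = real k + \<sigma> - real l + 1/2"
  shows "coef_b \<alpha> \<sigma> \<tau> k l = \<tau> powr (2 - \<alpha>) * integral {0..1} (\<lambda>s. (3/2 - s) * (y - s) powr (1 - \<alpha>))"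
  using assms by (simp add: coef_b_def)

lemma coef_b_diag:
  assumes "\<alpha> < 2" and "0 \<le> \<sigma> + 1/2"
  shows "coef_b \<alpha> \<sigma> \<tau> k k = \<tau> powr (2 - \<alpha>) * ((\<sigma> + 1/2) powr (2 - \<alpha>) / (2 - \<alpha>))"
proof -
  have "((\<lambda>s. s powr (1 - \<alpha>)) has_integral (\<sigma> + 1/2) powr (2 - \<alpha>) / (2 - \<alpha>)) {0..\<sigma> + 1/2}"
    using has_integral_powr_from_0[of "1 - \<alpha>" "\<sigma> + 1/2"] assms by (simp add: diff_add_eq)
  then show ?thesis by (simp add: coef_b_def integral_unique)
qed

lemma coef_c_eq:
  "l < k \<Longrightarrow> coef_c \<alpha> \<sigma> \<tau> k l = coef_a \<alpha> \<sigma> \<tau> k (k - l) + coef_b \<alpha> \<sigma> \<tau> k (k - l)"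
  by (simp add: coef_c_def)

lemma coef_a_1_nonpos:
  assumes "1 < \<alpha>" "\<alpha> < 2" "1 \<le> real k + \<sigma>"
  shows "coef_a \<alpha> \<sigma> \<tau> k 1 \<le> 0"
proof -
  have "integral {0..1/2} (\<lambda>s. (s - 1/3) * (real k + \<sigma> - s) powr (1 - \<alpha>)) \<le> 0"
    using assms by (intro integral_third_kernel_nonpos) auto
  then show ?thesis unfolding coef_a_1 by (simp add: mult_nonneg_nonpos)
qed

lemma coef_c_last_nonneg:
  assumes "1 < \<alpha>" "\<alpha> < 2" "\<sigma> = 1 - \<alpha> / 2" "1 \<le> k"
  shows "0 \<le> coef_c \<alpha> \<sigma> \<tau> k (k - 1)"
proof -
  define T where "T = \<tau> powr (2 - \<alpha>)"
  define x where "x = real k + \<sigma>"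
  define F where "F = (x - 1/3) powr (1 - \<alpha>)"
  have T: "0 \<le> T" and F: "0 \<le> F" unfolding T_def F_def by simp_all
  have c: "coef_c \<alpha> \<sigma> \<tau> k (k - 1) = coef_a \<alpha> \<sigma> \<tau> k 1 + coef_b \<alpha> \<sigma> \<tau> k 1"
    using assms coef_c_eq[of "k - 1" k] by simp
  have "- F / 24 \<le> integral {0..1/2} (\<lambda>s. (s - 1/3) * (x - s) powr (1 - \<alpha>))"
    using assms unfolding x_def F_def by (intro integral_third_kernel_ge) auto
  from mult_left_mono[OF this, of "3/2 * T"]
  have a: "- T * F / 16 \<le> coef_a \<alpha> \<sigma> \<tau> k 1"
    using T unfolding coef_a_1 T_def x_def by simp
  show ?thesis
  proof (cases "k = 1")
    case True
    define q where "q = \<sigma> + 1/2"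
    have q: "1/2 < q" "q \<le> 1" using assms unfolding q_def by auto
    have "q \<le> q powr (2 - \<alpha>)" using q assms powr_mono'[of "2 - \<alpha>" 1 q] by simp
    also have "\<dots> \<le> q powr (2 - \<alpha>) / (2 - \<alpha>)" using assms by (simp add: le_divide_eq mult_left_le)
    finally have "1/2 \<le> q powr (2 - \<alpha>) / (2 - \<alpha>)" using q by linarith
    from mult_left_mono[OF this T]
    have "T / 2 \<le> coef_b \<alpha> \<sigma> \<tau> k 1"
      using True assms coef_b_diag[of \<alpha> \<sigma> \<tau> 1] unfolding T_def q_def by simp
    moreover have "F \<le> 2"
      using True assms unfolding F_def x_def by (intro powr_le_two_if_ge_half) auto
    then have "F * T \<le> 2 * T" using T by (rule mult_right_mono)
    ultimately show ?thesis using a c T by (simp add: field_simps)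
  next
    case False
    have "(x - 1/2) powr (1 - \<alpha>) \<le> integral {0..1} (\<lambda>s. (3/2 - s) * (x - 1/2 - s) powr (1 - \<alpha>))"
      using False assms unfolding x_def by (intro integral_tail_kernel_bounds) auto
    moreover have "F \<le> (x - 1/2) powr (1 - \<alpha>)"
      using False assms unfolding F_def x_def by (intro powr_mono2') auto
    ultimately have "T * F \<le> coef_b \<alpha> \<sigma> \<tau> k 1"
      using False T unfolding T_def x_def
      by (subst coef_b_eq_integral[where y = "real k + \<sigma> - 1/2"]) (auto intro: mult_left_mono)
    then show ?thesis using a c mult_nonneg_nonneg[OF F T] by (simp add: field_simps)
  qed
qed

lemma coef_c_antimono:
  assumes "1 < \<alpha>" "\<alpha> < 2" "\<sigma> = 1 - \<alpha> / 2" "2 \<le> l" "l \<le> k - 1"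
  shows "coef_c \<alpha> \<sigma> \<tau> k l \<le> coef_c \<alpha> \<sigma> \<tau> k (l - 1)"
proof -
  define T where "T = \<tau> powr (2 - \<alpha>)"
  define j where "j = k - l"
  define y where "y = real k + \<sigma> - real j + 1/2"
  define A where "A z = integral {0..1} (\<lambda>s. (s - 1/2) * (z - s) powr (1 - \<alpha>))" for z
  define B where "B z = integral {0..1} (\<lambda>s. (3/2 - s) * (z - s) powr (1 - \<alpha>))" for z
  have T: "0 \<le> T" unfolding T_def by simp
  have j: "1 \<le> j" "j + 2 \<le> k" using assms unfolding j_def by auto
  then have y: "2 < y" using assms unfolding y_def by linarith
  have "coef_b \<alpha> \<sigma> \<tau> k j = T * B y"
    unfolding T_def B_def using j by (intro coef_b_eq_integral) (auto simp: y_def)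
  then have "coef_c \<alpha> \<sigma> \<tau> k l = coef_a \<alpha> \<sigma> \<tau> k j + T * B y"
    using assms coef_c_eq[of l k] unfolding j_def by simp
  moreover have "coef_c \<alpha> \<sigma> \<tau> k (l - 1) = T * (A y + B (y - 1))"
  proof -
    have "coef_a \<alpha> \<sigma> \<tau> k (Suc j) = T * A y"
      unfolding T_def A_def using j by (intro coef_a_eq_integral) (auto simp: y_def)
    moreover have "coef_b \<alpha> \<sigma> \<tau> k (Suc j) = T * B (y - 1)"
      unfolding T_def B_def using j by (intro coef_b_eq_integral) (auto simp: y_def)
    moreover have "k - (l - 1) = Suc j" using assms unfolding j_def by simp
    ultimately show ?thesis using assms coef_c_eq[of "l - 1" k] by (simp add: distrib_left)
  qed
  moreover have "coef_a \<alpha> \<sigma> \<tau> k j + T * B y \<le> T * (A y + B (y - 1))"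
  proof (cases "j = 1")
    case True
    have "coef_a \<alpha> \<sigma> \<tau> k j \<le> 0" using True j assms coef_a_1_nonpos[of \<alpha> k \<sigma> \<tau>] by simp
    moreover have "B y \<le> A y + B (y - 1)"
      using integral_tail_kernel_antimono[OF y, of "1 - \<alpha>"] integral_centred_kernel_nonneg[of y "1 - \<alpha>"] y assms
      unfolding A_def B_def by simp
    ultimately show ?thesis using mult_left_mono[of "B y" "A y + B (y - 1)" T] T by linarith
  next
    case False
    have "coef_a \<alpha> \<sigma> \<tau> k j = T * A (y + 1)"
      unfolding T_def A_def using False by (intro coef_a_eq_integral) (auto simp: y_def)
    moreover have "A (y + 1) + B y \<le> A y + B (y - 1)"
      using integral_kernel_step_le[OF y, of "1 - \<alpha>"] assms unfolding A_def B_def by simp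
    ultimately show ?thesis using mult_left_mono[of "A (y + 1) + B y" "A y + B (y - 1)" T] T
      by (simp add: distrib_left)
  qed
  ultimately show ?thesis by simp
qed

lemma coef_c_1_le_coef_c_0:
  assumes "1 < \<alpha>" "\<alpha> < 2" "\<sigma> = 1 - \<alpha> / 2" "2 \<le> k"
  shows "coef_c \<alpha> \<sigma> \<tau> k 1 * (1/2 + \<sigma>)\<^sup>2 \<le> coef_c \<alpha> \<sigma> \<tau> k 0 * ((1/2 + \<sigma>)\<^sup>2 - (1/2 - \<sigma>)\<^sup>2)"
proof -
  define T where "T = \<tau> powr (2 - \<alpha>)"
  define p where "p = 1 - \<alpha>"
  define q where "q = \<sigma> + 1/2"
  have T: "0 \<le> T" unfolding T_def by simp
  have q: "1/2 < q" "q < 1" and p: "p = - 2 * (1 - q)" using assms unfolding q_def p_def by auto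
  \<comment> \<open>Both sides are compared with \<open>T * q powr (2 - \<alpha>)\<close>, which is \<open>(2 - \<alpha>)\<close> times the
    diagonal term \<open>coef_b \<alpha> \<sigma> \<tau> k k\<close> of \<open>c\<^sub>0\<close>.\<close>
  have "T * q powr (2 - \<alpha>) \<le> coef_c \<alpha> \<sigma> \<tau> k 0 * (2 - \<alpha>)"
  proof -
    have "coef_a \<alpha> \<sigma> \<tau> k k = T * integral {0..1} (\<lambda>s. (s - 1/2) * (q + 1 - s) powr (1 - \<alpha>))"
      unfolding T_def using assms by (intro coef_a_eq_integral) (auto simp: q_def)
    then have "0 \<le> coef_a \<alpha> \<sigma> \<tau> k k"
      using T q assms by (simp add: integral_centred_kernel_nonneg)
    moreover have "coef_b \<alpha> \<sigma> \<tau> k k * (2 - \<alpha>) = T * q powr (2 - \<alpha>)"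
      using coef_b_diag[of \<alpha> \<sigma> \<tau> k] assms q unfolding T_def q_def by simp
    ultimately show ?thesis using assms coef_c_eq[of 0 k] by (simp add: distrib_right)
  qed
  moreover have "coef_c \<alpha> \<sigma> \<tau> k 1 \<le> T * (q powr p - p / 4)"
  proof -
    have "coef_b \<alpha> \<sigma> \<tau> k (k - 1) = T * integral {0..1} (\<lambda>s. (3/2 - s) * (q + 1 - s) powr p)"
      unfolding T_def p_def using assms by (intro coef_b_eq_integral) (auto simp: q_def of_nat_diff)
    then have b: "coef_b \<alpha> \<sigma> \<tau> k (k - 1) \<le> T * q powr p"
      using integral_tail_kernel_bounds(2)[of "q + 1" p] T q assms unfolding p_def
      by (simp add: mult_left_mono)
    have a: "coef_a \<alpha> \<sigma> \<tau> k (k - 1) \<le> T * (- p / 4)"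
    proof (cases "k = 2")
      case True
      then have "coef_a \<alpha> \<sigma> \<tau> k (k - 1) \<le> 0" using coef_a_1_nonpos[of \<alpha> k \<sigma> \<tau>] assms by simp
      moreover have "0 \<le> T * (- p / 4)" using T assms unfolding p_def by simp
      ultimately show ?thesis by linarith
    next
      case False
      have "integral {0..1} (\<lambda>s. (s - 1/2) * (q + 2 - s) powr p)
              \<le> ((q + 1) powr p - (q + 1 + 1) powr p) / 4"
        using integral_centred_kernel_le[of "q + 2" p] q assms unfolding p_def by (simp add: add.commute)
      moreover have "(q + 1) powr p - (q + 1 + 1) powr p \<le> - p"
        using q assms unfolding p_def by (intro powr_diff_add_one_le) auto
      ultimately have I: "integral {0..1} (\<lambda>s. (s - 1/2) * (q + 2 - s) powr p) \<le> - p / 4"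
        by (simp add: field_simps)
      have "coef_a \<alpha> \<sigma> \<tau> k (k - 1) = T * integral {0..1} (\<lambda>s. (s - 1/2) * (q + 2 - s) powr p)"
        unfolding T_def p_def using assms False by (intro coef_a_eq_integral) (auto simp: q_def of_nat_diff)
      then show ?thesis using mult_left_mono[OF I T] by simp
    qed
    show ?thesis using a b assms coef_c_eq[of 1 k] by (simp add: right_diff_distrib)
  qed
  from mult_right_mono[OF this zero_le_power2[of q]]
  have "coef_c \<alpha> \<sigma> \<tau> k 1 * q\<^sup>2 \<le> T * ((q powr p - p / 4) * q\<^sup>2)"
    by (simp add: mult.assoc)
  moreover have "(q powr p - p / 4) * q\<^sup>2 \<le> q powr (2 - \<alpha>)"
  proof -
    define Q where "Q = q powr p"
    have "1 \<le> Q" unfolding Q_def p_def using q assms powr_mono2'[of "1 - \<alpha>" q 1] by simp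
    then have "0 \<le> q * (1 - q) * (Q - q / 2)" using q by simp
    moreover have "(Q - p / 4) * q\<^sup>2 = Q * q - q * (1 - q) * (Q - q / 2)"
      unfolding p by (simp add: power2_eq_square field_simps)
    moreover have "q powr (2 - \<alpha>) = Q * q" unfolding Q_def p_def using q powr_add[of q "1 - \<alpha>" 1] by simp
    ultimately show ?thesis unfolding Q_def by linarith
  qed
  ultimately have "coef_c \<alpha> \<sigma> \<tau> k 1 * q\<^sup>2 \<le> coef_c \<alpha> \<sigma> \<tau> k 0 * (2 - \<alpha>)"
    using T by (meson mult_left_mono order_trans)
  moreover have "q\<^sup>2 - (1/2 - \<sigma>)\<^sup>2 = 2 - \<alpha>" using assms unfolding q_def by (simp add: power2_eq_square algebra_simps)
  ultimately show ?thesis unfolding q_def by (simp add: add.commute)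
qed

lemma sum_lessThan_Suc_mult_diff_by_parts:
  fixes c E :: "nat \<Rightarrow> 'a::comm_ring"
  shows "(\<Sum>l<Suc n. c l * (E (Suc l) - E l))
           = c n * E (Suc n) - c 0 * E 0 + (\<Sum>l = 1..n. (c (l - 1) - c l) * E l)"
  by (induction n) (simp_all add: algebra_simps)

lemma sum_increments_times_mean_ge:
  fixes c v :: "nat \<Rightarrow> real" and r :: real and k :: nat
  assumes "1 \<le> k" and last_nonneg: "0 \<le> c (k - 1)"
    and antimono: "\<And>l. 2 \<le> l \<Longrightarrow> l \<le> k - 1 \<Longrightarrow> c l \<le> c (l - 1)"
    and first: "2 \<le> k \<Longrightarrow> c 1 * r\<^sup>2 \<le> c 0 * (r\<^sup>2 - (1 - r)\<^sup>2)"
    and "1/2 \<le> r"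
  shows "1/2 * (\<Sum>l = 0..k - 1. c l * ((v (k - l))\<^sup>2 - (v (k - l - 1))\<^sup>2))
       \<le> (\<Sum>l = 0..k - 1. c l * ((v (k - l) - v (k - l - 1)) * (r * v k + (1 - r) * v (k - 1))))"
proof -
  obtain n where k: "k = Suc n" using assms(1) by (cases k) auto
  define w where "w = r * v k + (1 - r) * v n"
  define E where "E l = (v (k - l) - w)\<^sup>2 / 2" for l
  define d where "d = v k - v n"
  have E0: "E 0 = (1 - r)\<^sup>2 * d\<^sup>2 / 2" and E1: "E 1 = r\<^sup>2 * d\<^sup>2 / 2"
    unfolding E_def w_def d_def k by (simp_all add: power2_eq_square algebra_simps)
  have E_nonneg: "0 \<le> E l" for l unfolding E_def by simp
  have "(\<Sum>l = 0..k - 1. c l * ((v (k - l) - v (k - l - 1)) * w))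
          - 1/2 * (\<Sum>l = 0..k - 1. c l * ((v (k - l))\<^sup>2 - (v (k - l - 1))\<^sup>2))
        = (\<Sum>l<Suc n. c l * (E (Suc l) - E l))"
    unfolding k E_def atLeast0AtMost lessThan_Suc_atMost[symmetric] sum_distrib_left sum_subtractf[symmetric]
    by (intro sum.cong) (simp_all add: power2_eq_square field_simps)
  also have "\<dots> = c n * E (Suc n) - c 0 * E 0 + (\<Sum>l = 1..n. (c (l - 1) - c l) * E l)"
    by (rule sum_lessThan_Suc_mult_diff_by_parts)
  also have "0 \<le> \<dots>"
  proof (cases "n = 0")
    case True
    have "c 0 * E 1 - c 0 * E 0 = c 0 * (2 * r - 1) * d\<^sup>2 / 2"
      unfolding E0 E1 by (simp add: power2_eq_square field_simps)
    also have "0 \<le> \<dots>" using last_nonneg k True \<open>1/2 \<le> r\<close> by simp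
    finally show ?thesis using True by simp
  next
    case False
    have "(\<Sum>l = 1..n. (c (l - 1) - c l) * E l) = (c 0 - c 1) * E 1 + (\<Sum>l = 2..n. (c (l - 1) - c l) * E l)"
      using False by (simp add: sum.atLeast_Suc_atMost numeral_2_eq_2)
    moreover have "0 \<le> (\<Sum>l = 2..n. (c (l - 1) - c l) * E l)"
      using antimono k E_nonneg by (intro sum_nonneg mult_nonneg_nonneg) auto
    moreover have "0 \<le> c n * E (Suc n)" using last_nonneg k E_nonneg by simp
    moreover have "(c 0 - c 1) * E 1 - c 0 * E 0 = d\<^sup>2 / 2 * (c 0 * (r\<^sup>2 - (1 - r)\<^sup>2) - c 1 * r\<^sup>2)"
      unfolding E0 E1 by (simp add: field_simps)
    moreover have "0 \<le> d\<^sup>2 / 2 * (c 0 * (r\<^sup>2 - (1 - r)\<^sup>2) - c 1 * r\<^sup>2)"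
      using first k False by simp
    ultimately show ?thesis by linarith
  qed
  finally show ?thesis unfolding w_def k by simp
qed

lemma grid_norm_sq: "0 \<le> h \<Longrightarrow> (grid_norm h M f)\<^sup>2 = grid_inner h M f f"
  unfolding grid_norm_def grid_inner_def by (simp add: sum_nonneg)

lemma sum_mult_grid_inner:
  "(\<Sum>l\<in>A. c l * grid_inner h M (f l) (g l)) = h * (\<Sum>i = 1..M - 1. \<Sum>l\<in>A. c l * (f l i * g l i))"
  unfolding grid_inner_def by (simp add: sum_distrib_left mult_ac sum.swap[of _ A])

lemma sum_mult_grid_norm_sq_diff:
  assumes "0 \<le> h"
  shows "(\<Sum>l\<in>A. c l * ((grid_norm h M (f l))\<^sup>2 - (grid_norm h M (g l))\<^sup>2))
           = h * (\<Sum>i = 1..M - 1. \<Sum>l\<in>A. c l * ((f l i)\<^sup>2 - (g l i)\<^sup>2))"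
  unfolding grid_norm_sq[OF assms] grid_inner_def
  by (simp add: power2_eq_square right_diff_distrib sum_subtractf sum_distrib_left mult_ac sum.swap[of _ A])

lemma sum_coef_c_increments_times_mean_ge:
  assumes "1 < \<alpha>" "\<alpha> < 2" "\<sigma> = 1 - \<alpha> / 2" "1 \<le> k"
  shows "1/2 * (\<Sum>l = 0..k - 1. coef_c \<alpha> \<sigma> \<tau> k l * ((v (k - l))\<^sup>2 - (v (k - l - 1))\<^sup>2))
       \<le> (\<Sum>l = 0..k - 1. coef_c \<alpha> \<sigma> \<tau> k l *
             ((v (k - l) - v (k - l - 1)) * ((1/2 + \<sigma>) * v k + (1/2 - \<sigma>) * v (k - 1))))"
proof -
  let ?c = "coef_c \<alpha> \<sigma> \<tau> k" and ?r = "1/2 + \<sigma>"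
  have "1/2 * (\<Sum>l = 0..k - 1. ?c l * ((v (k - l))\<^sup>2 - (v (k - l - 1))\<^sup>2))
        \<le> (\<Sum>l = 0..k - 1. ?c l * ((v (k - l) - v (k - l - 1)) * (?r * v k + (1 - ?r) * v (k - 1))))"
  proof (rule sum_increments_times_mean_ge)
    show "0 \<le> ?c (k - 1)" using assms by (intro coef_c_last_nonneg) auto
    show "?c l \<le> ?c (l - 1)" if "2 \<le> l" "l \<le> k - 1" for l
      using assms that by (intro coef_c_antimono) auto
    show "?c 1 * ?r\<^sup>2 \<le> ?c 0 * (?r\<^sup>2 - (1 - ?r)\<^sup>2)" if "2 \<le> k"
      using coef_c_1_le_coef_c_0[of \<alpha> \<sigma> k \<tau>] assms that by simp
  qed (use assms in auto)
  moreover have "1 - ?r = 1/2 - \<sigma>" by simp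
  ultimately show ?thesis by (simp only:)
qed

theorem lemma3:
  fixes L \<alpha> \<sigma> \<tau> h :: real and M k :: nat and u :: "nat \<Rightarrow> nat \<Rightarrow> real"
  assumes "L > 0" and "M > 0" and "h = L / real M"
    and "1 < \<alpha>" and "\<alpha> < 2" and "\<sigma> = 1 - \<alpha> / 2" and "\<tau> > 0" and "k \<ge> 1"
    and "\<forall>j \<le> k + 1. u j 0 = 0 \<and> u j M = 0"
  shows "(\<Sum>l = 0..k - 1. coef_c \<alpha> \<sigma> \<tau> k l *
            grid_inner h M
              (\<lambda>i. delta_t \<tau> u (k - l) i - delta_t \<tau> u (k - l - 1) i)
              (\<lambda>i. (1/2 + \<sigma>) * delta_t \<tau> u k i + (1/2 - \<sigma>) * delta_t \<tau> u (k - 1) i))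
         \<ge> 1/2 * (\<Sum>l = 0..k - 1. coef_c \<alpha> \<sigma> \<tau> k l *
            ((grid_norm h M (delta_t \<tau> u (k - l)))\<^sup>2 - (grid_norm h M (delta_t \<tau> u (k - l - 1)))\<^sup>2))"
proof -
  \<comment> \<open>The boundary values of \<open>u\<close> play no role: the inequality holds node by node.\<close>
  let ?c = "coef_c \<alpha> \<sigma> \<tau> k" and ?v = "\<lambda>i j. delta_t \<tau> u j i"
  have h: "0 \<le> h" using assms(1-3) by simp
  have "1/2 * (\<Sum>l = 0..k - 1. ?c l *
            ((grid_norm h M (delta_t \<tau> u (k - l)))\<^sup>2 - (grid_norm h M (delta_t \<tau> u (k - l - 1)))\<^sup>2))
        = h * (\<Sum>i = 1..M - 1. 1/2 * (\<Sum>l = 0..k - 1. ?c l * ((?v i (k - l))\<^sup>2 - (?v i (k - l - 1))\<^sup>2)))"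
    by (simp only: sum_mult_grid_norm_sq_diff[OF h]) (simp add: sum_distrib_left mult_ac)
  also have "\<dots> \<le> h * (\<Sum>i = 1..M - 1. \<Sum>l = 0..k - 1. ?c l *
                ((?v i (k - l) - ?v i (k - l - 1)) * ((1/2 + \<sigma>) * ?v i k + (1/2 - \<sigma>) * ?v i (k - 1))))"
    using h assms by (intro mult_left_mono sum_mono sum_coef_c_increments_times_mean_ge) auto
  also have "\<dots> = (\<Sum>l = 0..k - 1. ?c l *
            grid_inner h M
              (\<lambda>i. delta_t \<tau> u (k - l) i - delta_t \<tau> u (k - l - 1) i)
              (\<lambda>i. (1/2 + \<sigma>) * delta_t \<tau> u k i + (1/2 - \<sigma>) * delta_t \<tau> u (k - 1) i))"
    by (simp only: sum_mult_grid_inner)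
  finally show ?thesis by simp
qed

end
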